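(* Suppose the digraph $\mathcal{G}=(\mathcal{V},\mathcal{E})$ is strongly connected. Then each of the four matrices $$\sum_{(j,i)\in\mathcal{E}}p_{ij}(I-L_{ji})\otimes(I-L_{ji}),\quad \sum_{(j,i)\in\mathcal{E}}p_{ij}(I-L_{ji})\otimes S_{ji},\quad \sum_{(j,i)\in\mathcal{E}}p_{ij}S_{ji}\otimes(I-L_{ji}),\quad \sum_{(j,i)\in\mathcal{E}}p_{ij}S_{ji}\otimes S_{ji}$$ has $1$ as a simple eigenvalue, and all of its other eigenvalues have modulus strictly smaller than one.
   Context: Setting: $\mathcal{V}=\{1,\dots,n\}$, $n>1$, and $\mathcal{G}$ has no selfloops. To each edge $(j,i)\in\mathcal{E}$ are assigned $p_{ij}\in(0,1)$, with $\sum_{(j,i)\in\mathcal{E}}p_{ij}=1$, and $w_{ij}\in(0,1)$. Notation: $f_i$ is the $i$-th standard basis vector of $\mathbb{R}^n$ and $\otimes$ is the Kronecker product. For each edge $(j,i)$, $L_{ji}=w_{ij}f_if_i^T-w_{ij}f_if_j^T$ and $S_{ji}=I-(f_j-f_i)f_j^T$. *)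

theory Defs
  imports "Jordan_Normal_Form.Jordan_Normal_Form"
begin

text \<open>Vertices are 0..n-1 (paper: 1..n). Standard basis vector f_i as an n x 1 column matrix.\<close>
definition fcol :: "nat \<Rightarrow> nat \<Rightarrow> real mat" where
  "fcol n i = mat n 1 (\<lambda>(a,b). if a = i then 1 else 0)"

definition Lmat :: "nat \<Rightarrow> (nat \<Rightarrow> nat \<Rightarrow> real) \<Rightarrow> nat \<Rightarrow> nat \<Rightarrow> real mat" where
  "Lmat n w j i = w i j \<cdot>\<^sub>m (fcol n i * transpose_mat (fcol n i))
                 - w i j \<cdot>\<^sub>m (fcol n i * transpose_mat (fcol n j))"

definition Smat :: "nat \<Rightarrow> nat \<Rightarrow> nat \<Rightarrow> real mat" where
  "Smat n j i = 1\<^sub>m n - (fcol n j - fcol n i) * transpose_mat (fcol n j)"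

definition kron :: "'a::times mat \<Rightarrow> 'a mat \<Rightarrow> 'a mat" where
  "kron A B = mat (dim_row A * dim_row B) (dim_col A * dim_col B)
     (\<lambda>(a,b). A $$ (a div dim_row B, b div dim_col B) * B $$ (a mod dim_row B, b mod dim_col B))"

definition msum :: "nat \<Rightarrow> ('b \<Rightarrow> 'a::comm_monoid_add mat) \<Rightarrow> 'b set \<Rightarrow> 'a mat" where
  "msum m F S = mat m m (\<lambda>ij. \<Sum>x\<in>S. F x $$ ij)"

definition simple_one_rest_inside :: "real mat \<Rightarrow> bool" where
  "simple_one_rest_inside M \<longleftrightarrow>
     (let Mc = map_mat complex_of_real M in
       eigenvalue Mc 1 \<and> order 1 (char_poly Mc) = 1 \<and>
       (\<forall>z. eigenvalue Mc z \<and> z \<noteq> 1 \<longrightarrow> cmod z < 1))"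

end

theory Submission
  imports
    Defs
    "Jordan_Normal_Form.Jordan_Normal_Form_Uniqueness"
    "Jordan_Normal_Form.Jordan_Normal_Form_Existence"
begin

text \<open>Each of the four matrices \<open>M\<close> is entrywise nonnegative and fixes a positive vector of
  product form \<open>u \<otimes> v\<close>: the all-ones vector for a factor \<open>I - L\<close> (its rows sum to one), and
  a Perron vector \<open>\<pi>\<close> of \<open>\<Sum> p\<^sub>i\<^sub>j S\<^sub>j\<^sub>i\<close> for a factor \<open>S\<close> (its columns sum to one); the
  matrix \<open>S \<otimes> S\<close> is treated through its transpose. Strong connectivity of the graph lets
  every index of the product graph reach \<open>(0,0)\<close> along positive entries of \<open>M\<close>, and \<open>M\<close> has
  a positive diagonal entry there. For such a matrix, comparing \<open>|x|\<close> with the fixed vector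
  \<open>h\<close> at a maximum of \<open>|x k| / h k\<close> shows that an eigenvalue of modulus at least one must be
  \<open>1\<close> and that the fixed vectors are the multiples of \<open>h\<close>; the same comparison applied to
  \<open>Re (cnj c x)\<close> rules out a Jordan chain \<open>M x = x + c h\<close>, so \<open>1\<close> is a simple root of the
  characteristic polynomial.\<close>

section \<open>Algebraic multiplicity via the Jordan normal form\<close>

lemma kernel_dim_le_1:
  fixes C :: "'a::field mat"
  assumes C: "C \<in> carrier_mat n n" and v: "v \<in> carrier_vec n" "C *\<^sub>v v = 0\<^sub>v n"
    and spanned: "\<And>x. x \<in> carrier_vec n \<Longrightarrow> C *\<^sub>v x = 0\<^sub>v n \<Longrightarrow> \<exists>d. x = d \<cdot>\<^sub>v v"
  shows "kernel_dim C \<le> 1"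
proof -
  interpret K: kernel n n C by (unfold_locales, rule C)
  have sub: "{v} \<subseteq> mat_kernel C" using mat_kernelI[OF C v] by auto
  have "K.Ker.span {v} = mat_kernel C"
  proof
    show "K.Ker.span {v} \<subseteq> mat_kernel C" using K.Ker.span_is_subset2[OF sub] .
    show "mat_kernel C \<subseteq> K.Ker.span {v}"
    proof
      fix x assume x: "x \<in> mat_kernel C"
      from mat_kernelD[OF C x] spanned obtain d where d: "x = d \<cdot>\<^sub>v v" by blast
      have "submodule class_ring (K.Ker.span {v}) K.VK" by (rule K.Ker.span_is_submodule[OF sub])
      moreover have "v \<in> K.Ker.span {v}" using K.Ker.in_own_span[OF sub] by auto
      ultimately show "x \<in> K.Ker.span {v}" unfolding d submodule_def by auto
    qed
  qed
  then have "card {v} \<ge> K.dim" by (intro K.Ker.gen_ge_dim) (use sub in auto)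
  then show ?thesis by simp
qed

lemma sum_list_le_1_if_sum_list_min_2_le_1:
  assumes "\<forall>k\<in>set ks. (0::nat) < k" "sum_list (map (min 2) ks) \<le> 1"
  shows "sum_list ks \<le> 1"
  using assms
proof (induction ks)
  case (Cons k ks)
  then show ?case by (cases ks) (auto simp: min_def split: if_splits)
qed simp

text \<open>Each Jordan block for \<open>e\<close> contributes \<open>min 2 size\<close> to the dimension of the kernel of
  \<open>(A - e I)\<^sup>2\<close>; so this dimension being at most one leaves room for a single block of size one.\<close>

lemma order_char_poly_le_1_if_dim_gen_eigenspace_le_1:
  fixes A :: "complex mat"
  assumes A: "A \<in> carrier_mat n n" and dim: "dim_gen_eigenspace A e 2 \<le> 1"
  shows "Polynomial.order e (char_poly A) \<le> 1"
proof -
  obtain as where "char_poly A = (\<Prod>a\<leftarrow>as. [:- a, 1:])" using char_poly_factorized[OF A] by auto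
  from jordan_nf_exists[OF A this] obtain n_as where jnf: "jordan_nf A n_as" by auto
  define ks where "ks = map fst (filter (\<lambda>na. snd na = e) n_as)"
  have "dim_gen_eigenspace A e 2 = sum_list (map (min 2) ks)"
    unfolding dim_gen_eigenspace[OF jnf] ks_def by (induction n_as) auto
  moreover have "\<forall>k\<in>set ks. 0 < k" using jnf unfolding jordan_nf_def ks_def by force
  ultimately have "sum_list ks \<le> 1" using dim sum_list_le_1_if_sum_list_min_2_le_1 by simp
  then show ?thesis unfolding jordan_nf_order[OF jnf] ks_def .
qed

lemma char_matrix_mult_vec:
  fixes A :: "'a::field mat"
  assumes "A \<in> carrier_mat n n" "x \<in> carrier_vec n"
  shows "char_matrix A e *\<^sub>v x = A *\<^sub>v x - e \<cdot>\<^sub>v x"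
  unfolding char_matrix_def using assms
  by (intro eq_vecI) (auto simp: add_mult_distrib_mat_vec[of _ n n] minus_add_uminus_vec)

lemma char_matrix_1_kernel_iff:
  fixes A :: "'a::field mat"
  assumes "A \<in> carrier_mat n n" "x \<in> carrier_vec n"
  shows "char_matrix A 1 *\<^sub>v x = 0\<^sub>v n \<longleftrightarrow> A *\<^sub>v x = x"
  using assms by (auto simp: char_matrix_mult_vec vec_eq_iff)

lemma mat_square_mult_vec:
  assumes "C \<in> carrier_mat n n" "x \<in> carrier_vec n"
  shows "C ^\<^sub>m 2 *\<^sub>v x = C *\<^sub>v (C *\<^sub>v x)"
  using assms by (simp add: numeral_2_eq_2 assoc_mult_mat_vec[of _ n n _ n])

lemma nonzero_vec_ex_nonzero_index:
  "x \<in> carrier_vec n \<Longrightarrow> x \<noteq> 0\<^sub>v n \<Longrightarrow> \<exists>k<n. x $ k \<noteq> 0"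
  by (auto simp: vec_eq_iff)

lemma simple_one_rest_inside_transpose:
  assumes "P \<in> carrier_mat N N" and "simple_one_rest_inside (transpose_mat P)"
  shows "simple_one_rest_inside P"
proof -
  let ?Pc = "map_mat complex_of_real P"
  have Pc: "?Pc \<in> carrier_mat N N" using assms(1) by simp
  then have "char_poly (transpose_mat ?Pc) = char_poly ?Pc" by simp
  moreover have "eigenvalue (transpose_mat ?Pc) z = eigenvalue ?Pc z" for z
    using eigenvalue_root_char_poly[OF Pc] eigenvalue_root_char_poly[of "transpose_mat ?Pc" N] Pc
      \<open>char_poly (transpose_mat ?Pc) = char_poly ?Pc\<close> by simp
  ultimately show ?thesis
    using assms(2) unfolding simple_one_rest_inside_def Let_def by (simp add: map_mat_transpose)
qed

section \<open>Nonnegative matrices with a positive fixed vector\<close>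

lemma ex_argmax_lessThan:
  fixes f :: "nat \<Rightarrow> 'a::linorder"
  assumes "0 < N"
  shows "\<exists>k<N. \<forall>b<N. f b \<le> f k"
proof -
  have fin: "finite (f ` {..<N})" and ne: "f ` {..<N} \<noteq> {}" using assms by auto
  obtain k where "k < N" "f k = Max (f ` {..<N})" using Max_in[OF fin ne] by auto
  then show ?thesis using Max_ge[OF fin] by auto
qed

lemma eq_1_if_norm_ge_1_in_disc:
  fixes z :: complex and c :: real
  assumes "1 \<le> cmod z" "0 < c" "cmod (z - of_real c) \<le> 1 - c"
  shows "z = 1"
proof -
  have "cmod z \<le> cmod (z - of_real c) + c"
    using norm_triangle_ineq[of "z - of_real c" "of_real c"] assms(2) by simp
  with assms have norm_z: "cmod z = 1" and norm_zc: "cmod (z - of_real c) = 1 - c" by linarith+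
  have "(Re z - c)^2 + (Im z)^2 = (1 - c)^2"
    using cmod_power2[of "z - of_real c"] norm_zc by simp
  moreover have unit: "(Re z)^2 + (Im z)^2 = 1"
    using cmod_power2[of z] norm_z by simp
  moreover have "(Re z - c)^2 = (Re z)^2 - 2 * c * Re z + c^2" "(1 - c)^2 = 1 - 2 * c + c^2"
    by (simp_all add: power2_diff)
  ultimately have "c * Re z = c" by linarith
  then have "Re z = 1" using assms(2) by simp
  with unit have "Im z = 0" by simp
  with \<open>Re z = 1\<close> show ?thesis by (simp add: complex_eq_iff)
qed

definition pos_entries :: "nat \<Rightarrow> 'a::{zero,ord} mat \<Rightarrow> (nat \<times> nat) set" where
  "pos_entries N P = {(k,b). k < N \<and> b < N \<and> 0 < P $$ (k,b)}"

locale nonneg_fixed_vector =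
  fixes N :: nat and P :: "real mat" and h :: "nat \<Rightarrow> real"
  assumes carrier: "P \<in> carrier_mat N N"
    and nonneg: "\<And>k b. k < N \<Longrightarrow> b < N \<Longrightarrow> 0 \<le> P $$ (k,b)"
    and h_pos: "\<And>k. k < N \<Longrightarrow> 0 < h k"
    and fixed: "\<And>k. k < N \<Longrightarrow> (\<Sum>b<N. P $$ (k,b) * h b) = h k"
begin

lemma weighted_sum_le:
  assumes "\<And>b. b < N \<Longrightarrow> f b \<le> m * h b" and "k < N"
  shows "(\<Sum>b<N. P $$ (k,b) * f b) \<le> m * h k"
proof -
  have "(\<Sum>b<N. P $$ (k,b) * f b) \<le> (\<Sum>b<N. P $$ (k,b) * (m * h b))"
    by (intro sum_mono mult_left_mono) (use assms nonneg in auto)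
  also have "\<dots> = m * (\<Sum>b<N. P $$ (k,b) * h b)"
    by (simp add: sum_distrib_left algebra_simps)
  also have "\<dots> = m * h k" using fixed[OF assms(2)] by simp
  finally show ?thesis .
qed

lemma norm_weighted_sum_le:
  assumes "k < N"
  shows "cmod (\<Sum>b<N. of_real (P $$ (k,b)) * x b) \<le> (\<Sum>b<N. P $$ (k,b) * cmod (x b))"
proof -
  have "cmod (\<Sum>b<N. of_real (P $$ (k,b)) * x b) \<le> (\<Sum>b<N. cmod (of_real (P $$ (k,b)) * x b))"
    by (rule norm_sum)
  also have "\<dots> = (\<Sum>b<N. P $$ (k,b) * cmod (x b))"
    by (rule sum.cong) (use assms nonneg in \<open>auto simp: norm_mult\<close>)
  finally show ?thesis .
qed

text \<open>Pairing with \<open>c\<close> turns the equation into \<open>P a = a + |c|\<^sup>2 h\<close> for the real vector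
  \<open>a = Re (cnj c x)\<close>, which fails where \<open>a / h\<close> is maximal unless \<open>c = 0\<close>.\<close>

lemma no_generalized_fixed_vector:
  fixes x :: "nat \<Rightarrow> complex" and c :: complex
  assumes "0 < N"
    and chain: "\<And>k. k < N \<Longrightarrow> (\<Sum>b<N. of_real (P $$ (k,b)) * x b) = x k + c * of_real (h k)"
  shows "c = 0"
proof -
  define a where "a k = Re (cnj c * x k)" for k
  have a_chain: "(\<Sum>b<N. P $$ (k,b) * a b) = a k + (cmod c)^2 * h k" if "k < N" for k
  proof -
    have "(\<Sum>b<N. P $$ (k,b) * a b) = Re (cnj c * (\<Sum>b<N. of_real (P $$ (k,b)) * x b))"
      unfolding a_def by (simp add: sum_distrib_left algebra_simps)
    also have "\<dots> = a k + Re (cnj c * c) * h k"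
      unfolding a_def using chain[OF that] by (simp add: algebra_simps)
    also have "Re (cnj c * c) = (cmod c)^2" unfolding cmod_power2 by (simp add: power2_eq_square)
    finally show ?thesis .
  qed
  obtain k where k: "k < N" and max: "\<And>b. b < N \<Longrightarrow> a b / h b \<le> a k / h k"
    using ex_argmax_lessThan[OF \<open>0 < N\<close>, of "\<lambda>b. a b / h b"] by auto
  have "a b \<le> a k / h k * h b" if "b < N" for b
    using max[OF that] h_pos[OF that] by (simp add: divide_le_eq)
  then have "(\<Sum>b<N. P $$ (k,b) * a b) \<le> a k / h k * h k" by (rule weighted_sum_le[OF _ k])
  then have "(\<Sum>b<N. P $$ (k,b) * a b) \<le> a k" using h_pos[OF k] by simp
  then have "(cmod c)^2 * h k \<le> 0" using a_chain[OF k] by simp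
  then show "c = 0" using h_pos[OF k] by (simp add: mult_le_0_iff)
qed

lemma subharmonic_max_propagates:
  fixes f :: "nat \<Rightarrow> real"
  assumes bound: "\<And>b. b < N \<Longrightarrow> f b \<le> m * h b"
    and subharmonic: "\<And>k. k < N \<Longrightarrow> f k \<le> (\<Sum>b<N. P $$ (k,b) * f b)"
    and path: "(k, l) \<in> (pos_entries N P)\<^sup>*" and attained: "f k = m * h k"
  shows "f l = m * h l"
  using path
proof (induction rule: rtrancl_induct)
  case base
  show ?case by (rule attained)
next
  case (step b l)
  then have b: "b < N" and l: "l < N" and pos: "0 < P $$ (b,l)" by (auto simp: pos_entries_def)
  have "(\<Sum>b'<N. P $$ (b,b') * (m * h b' - f b'))
      = m * (\<Sum>b'<N. P $$ (b,b') * h b') - (\<Sum>b'<N. P $$ (b,b') * f b')"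
    by (simp add: algebra_simps sum_subtractf sum_distrib_left)
  also have "\<dots> = m * h b - (\<Sum>b'<N. P $$ (b,b') * f b')" using fixed[OF b] by simp
  also have "\<dots> \<le> 0" using subharmonic[OF b] step.IH by simp
  finally have "(\<Sum>b'<N. P $$ (b,b') * (m * h b' - f b')) = 0"
    by (intro order.antisym sum_nonneg) (use bound nonneg b in auto)
  then have "P $$ (b,l) * (m * h l - f l) = 0"
    using sum_nonneg_eq_0_iff[of "{..<N}" "\<lambda>b'. P $$ (b,b') * (m * h b' - f b')"]
      bound nonneg b l by auto
  then show ?case using pos by simp
qed

end

locale rooted_nonneg_fixed_vector = nonneg_fixed_vector +
  fixes r :: nat
  assumes root: "r < N"
    and root_loop: "0 < P $$ (r,r)"
    and reaches_root: "\<And>k. k < N \<Longrightarrow> (k, r) \<in> (pos_entries N P)\<^sup>*"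
begin

text \<open>For an eigenvalue outside the open unit disc, \<open>|x|\<close> is subharmonic, so the largest
  ratio \<open>|x k| / h k\<close> spreads along positive entries and is attained at the root.\<close>

lemma root_attains_max_ratio:
  fixes x :: "nat \<Rightarrow> complex"
  assumes eigen: "\<And>k. k < N \<Longrightarrow> z * x k = (\<Sum>b<N. of_real (P $$ (k,b)) * x b)"
    and "1 \<le> cmod z" and "\<exists>k<N. x k \<noteq> 0"
  obtains m where "0 < m" "\<And>b. b < N \<Longrightarrow> cmod (x b) \<le> m * h b" "cmod (x r) = m * h r"
proof -
  obtain k where k: "k < N" and max: "\<And>b. b < N \<Longrightarrow> cmod (x b) / h b \<le> cmod (x k) / h k"
    using ex_argmax_lessThan[of N "\<lambda>b. cmod (x b) / h b"] root by auto
  define m where "m = cmod (x k) / h k"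
  obtain k' where "k' < N" "x k' \<noteq> 0" using assms(3) by auto
  then have "0 < cmod (x k') / h k'" using h_pos by simp
  then have "0 < m" using max[OF \<open>k' < N\<close>] unfolding m_def by linarith
  have bound: "cmod (x b) \<le> m * h b" if "b < N" for b
    using max[OF that] h_pos[OF that] unfolding m_def by (simp add: divide_le_eq)
  have "cmod (x l) \<le> (\<Sum>b<N. P $$ (l,b) * cmod (x b))" if "l < N" for l
  proof -
    have "cmod (x l) \<le> cmod z * cmod (x l)" using assms(2) by (simp add: mult_le_cancel_right1)
    also have "\<dots> = cmod (\<Sum>b<N. of_real (P $$ (l,b)) * x b)" by (metis eigen[OF that] norm_mult)
    also have "\<dots> \<le> (\<Sum>b<N. P $$ (l,b) * cmod (x b))" by (rule norm_weighted_sum_le[OF that])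
    finally show ?thesis .
  qed
  moreover have "cmod (x k) = m * h k" using h_pos[OF k] unfolding m_def by simp
  ultimately have "cmod (x r) = m * h r"
    using subharmonic_max_propagates[OF bound _ reaches_root[OF k]] by blast
  with \<open>0 < m\<close> bound show ?thesis using that by blast
qed

text \<open>The loop at the root places \<open>z\<close> in the disc of radius \<open>1 - P r r\<close> around \<open>P r r\<close>.\<close>

lemma peripheral_eigenvalue_eq_1:
  fixes x :: "nat \<Rightarrow> complex"
  assumes eigen: "\<And>k. k < N \<Longrightarrow> z * x k = (\<Sum>b<N. of_real (P $$ (k,b)) * x b)"
    and "1 \<le> cmod z" and "\<exists>k<N. x k \<noteq> 0"
  shows "z = 1"
proof -
  obtain m where "0 < m" and bound: "\<And>b. b < N \<Longrightarrow> cmod (x b) \<le> m * h b"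
    and at_root: "cmod (x r) = m * h r"
    using root_attains_max_ratio[OF assms] by blast
  define c where "c = P $$ (r,r)"
  let ?others = "{..<N} - {r}"
  have "(z - of_real c) * x r = (\<Sum>b\<in>?others. of_real (P $$ (r,b)) * x b)"
    using eigen[OF root] root unfolding c_def by (simp add: sum.remove algebra_simps)
  then have "cmod (z - of_real c) * cmod (x r) \<le> (\<Sum>b\<in>?others. cmod (of_real (P $$ (r,b)) * x b))"
    by (metis norm_mult norm_sum)
  also have "\<dots> \<le> (\<Sum>b\<in>?others. P $$ (r,b) * (m * h b))"
    by (intro sum_mono) (use bound nonneg root in \<open>auto simp: norm_mult intro: mult_left_mono\<close>)
  also have "\<dots> = (\<Sum>b<N. P $$ (r,b) * (m * h b)) - c * (m * h r)"
    unfolding c_def using root by (simp add: sum_diff1)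
  also have "(\<Sum>b<N. P $$ (r,b) * (m * h b)) = m * (\<Sum>b<N. P $$ (r,b) * h b)"
    by (simp add: sum_distrib_left algebra_simps)
  also have "\<dots> = m * h r" using fixed[OF root] by simp
  finally have "cmod (z - of_real c) * (m * h r) \<le> (1 - c) * (m * h r)"
    using at_root by (simp add: algebra_simps)
  then have "cmod (z - of_real c) \<le> 1 - c"
    using \<open>0 < m\<close> h_pos[OF root] by (simp add: mult_le_cancel_right)
  then show "z = 1"
    using eq_1_if_norm_ge_1_in_disc assms(2) root_loop unfolding c_def by blast
qed

lemma fixed_vector_proportional:
  fixes y :: "nat \<Rightarrow> complex"
  assumes fix_y: "\<And>k. k < N \<Longrightarrow> (\<Sum>b<N. of_real (P $$ (k,b)) * y b) = y k" and "k < N"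
  shows "y k = y r / of_real (h r) * of_real (h k)"
proof -
  define d where "d = y r / of_real (h r)"
  define x where "x l = y l - d * of_real (h l)" for l
  have eigen: "1 * x l = (\<Sum>b<N. of_real (P $$ (l,b)) * x b)" if l: "l < N" for l
  proof -
    have "(\<Sum>b<N. of_real (P $$ (l,b)) * x b)
        = (\<Sum>b<N. of_real (P $$ (l,b)) * y b) - d * of_real (\<Sum>b<N. P $$ (l,b) * h b)"
      unfolding x_def by (simp add: algebra_simps sum_subtractf sum_distrib_left)
    also have "\<dots> = x l" unfolding x_def using fixed[OF l] fix_y[OF l] by simp
    finally show ?thesis by simp
  qed
  have "x r = 0" using h_pos[OF root] unfolding x_def d_def by simp
  have "x l = 0" if "l < N" for l
  proof (rule ccontr)
    assume "x l \<noteq> 0"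
    with that have nonzero: "\<exists>k<N. x k \<noteq> 0" by blast
    obtain m where "0 < m" "cmod (x r) = m * h r"
      using root_attains_max_ratio[OF eigen _ nonzero] by auto
    with \<open>x r = 0\<close> h_pos[OF root] show False by simp
  qed
  then show ?thesis using \<open>k < N\<close> unfolding x_def d_def by simp
qed

abbreviation Pc :: "complex mat" where "Pc \<equiv> map_mat complex_of_real P"

definition hvec :: "complex vec" where "hvec = vec N (\<lambda>k. of_real (h k))"

lemma Pc_carrier: "Pc \<in> carrier_mat N N"
  using carrier by simp

lemma hvec_carrier: "hvec \<in> carrier_vec N"
  unfolding hvec_def by simp

lemma Pc_mult_vec_index:
  assumes "x \<in> carrier_vec N" "k < N"
  shows "(Pc *\<^sub>v x) $ k = (\<Sum>b<N. of_real (P $$ (k,b)) * x $ b)"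
  using assms carrier by (auto simp: scalar_prod_def lessThan_atLeast0 intro!: sum.cong)

lemma Pc_mult_vec_eq_iff:
  assumes "x \<in> carrier_vec N"
  shows "Pc *\<^sub>v x = z \<cdot>\<^sub>v x \<longleftrightarrow> (\<forall>k<N. z * x $ k = (\<Sum>b<N. of_real (P $$ (k,b)) * x $ b))"
proof -
  have dims: "Pc *\<^sub>v x \<in> carrier_vec N" "z \<cdot>\<^sub>v x \<in> carrier_vec N" using assms Pc_carrier by auto
  have "Pc *\<^sub>v x = z \<cdot>\<^sub>v x \<longleftrightarrow> (\<forall>k<N. (Pc *\<^sub>v x) $ k = (z \<cdot>\<^sub>v x) $ k)"
  proof
    assume "\<forall>k<N. (Pc *\<^sub>v x) $ k = (z \<cdot>\<^sub>v x) $ k"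
    then show "Pc *\<^sub>v x = z \<cdot>\<^sub>v x" using dims carrier by (intro eq_vecI) auto
  qed simp
  also have "\<dots> \<longleftrightarrow> (\<forall>k<N. z * x $ k = (\<Sum>b<N. of_real (P $$ (k,b)) * x $ b))"
    using assms by (auto simp: Pc_mult_vec_index)
  finally show ?thesis .
qed

lemma Pc_hvec: "Pc *\<^sub>v hvec = hvec"
proof -
  have "1 * hvec $ k = (\<Sum>b<N. of_real (P $$ (k,b)) * hvec $ b)" if "k < N" for k
  proof -
    have "of_real (\<Sum>b<N. P $$ (k,b) * h b) = (\<Sum>b<N. of_real (P $$ (k,b)) * hvec $ b)"
      unfolding of_real_sum by (rule sum.cong) (simp_all add: hvec_def)
    then show ?thesis using fixed[OF that] that by (simp add: hvec_def)
  qed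
  then have "Pc *\<^sub>v hvec = 1 \<cdot>\<^sub>v hvec" using Pc_mult_vec_eq_iff[OF hvec_carrier] by blast
  then show ?thesis by simp
qed

lemma eigenvalue_Pc_1: "eigenvalue Pc 1"
proof -
  have "hvec \<noteq> 0\<^sub>v N"
  proof
    assume "hvec = 0\<^sub>v N"
    then have "hvec $ r = 0" using root by simp
    then show False using h_pos[OF root] root by (simp add: hvec_def)
  qed
  then have "eigenvector Pc hvec 1"
    unfolding eigenvector_def using Pc_carrier hvec_carrier Pc_hvec by simp
  then show ?thesis unfolding eigenvalue_def by blast
qed

lemma eigenvalue_Pc_inside_unit_disc:
  assumes "eigenvalue Pc z" "z \<noteq> 1"
  shows "cmod z < 1"
proof (rule ccontr)
  assume "\<not> cmod z < 1"
  from assms(1) obtain x where "eigenvector Pc x z" unfolding eigenvalue_def by blast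
  then have x: "x \<in> carrier_vec N" "x \<noteq> 0\<^sub>v N" "Pc *\<^sub>v x = z \<cdot>\<^sub>v x"
    unfolding eigenvector_def using carrier by auto
  have eigen: "\<And>k. k < N \<Longrightarrow> z * x $ k = (\<Sum>b<N. of_real (P $$ (k,b)) * x $ b)"
    using Pc_mult_vec_eq_iff[OF x(1), THEN iffD1, OF x(3)] by blast
  moreover have "1 \<le> cmod z" using \<open>\<not> cmod z < 1\<close> by simp
  ultimately have "z = 1"
    using peripheral_eigenvalue_eq_1 nonzero_vec_ex_nonzero_index[OF x(1,2)] by blast
  with assms(2) show False ..
qed

lemma fixed_vec_proportional:
  assumes y: "y \<in> carrier_vec N" and "Pc *\<^sub>v y = y"
  shows "\<exists>d. y = d \<cdot>\<^sub>v hvec"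
proof -
  have fix_y: "(\<Sum>b<N. of_real (P $$ (k,b)) * y $ b) = y $ k" if "k < N" for k
    using Pc_mult_vec_index[OF y that] assms(2) by simp
  define d where "d = y $ r / of_real (h r)"
  have "y $ k = (d \<cdot>\<^sub>v hvec) $ k" if "k < N" for k
    using fixed_vector_proportional[OF fix_y that] that unfolding d_def hvec_def by simp
  then have "y = d \<cdot>\<^sub>v hvec" using y hvec_carrier by (intro eq_vecI) auto
  then show ?thesis ..
qed

lemma gen_eigenspace_1_spanned:
  assumes x: "x \<in> carrier_vec N" and "char_matrix Pc 1 ^\<^sub>m 2 *\<^sub>v x = 0\<^sub>v N"
  shows "\<exists>d. x = d \<cdot>\<^sub>v hvec"
proof -
  let ?C = "char_matrix Pc 1"
  have C: "?C \<in> carrier_mat N N" using Pc_carrier by simp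
  then have Cx: "?C *\<^sub>v x \<in> carrier_vec N" using x by simp
  have "?C *\<^sub>v (?C *\<^sub>v x) = 0\<^sub>v N" using assms(2) mat_square_mult_vec[OF C x] by simp
  then have "Pc *\<^sub>v (?C *\<^sub>v x) = ?C *\<^sub>v x" using char_matrix_1_kernel_iff[OF Pc_carrier Cx] by simp
  then obtain c where c: "?C *\<^sub>v x = c \<cdot>\<^sub>v hvec" using fixed_vec_proportional[OF Cx] by blast
  have chain: "(\<Sum>b<N. of_real (P $$ (k,b)) * x $ b) = x $ k + c * of_real (h k)" if "k < N" for k
  proof -
    have "(Pc *\<^sub>v x) $ k - x $ k = (?C *\<^sub>v x) $ k"
      using char_matrix_mult_vec[OF Pc_carrier x, of 1] that x Pc_carrier by simp
    also have "\<dots> = c * of_real (h k)" using c that by (simp add: hvec_def)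
    finally show ?thesis using Pc_mult_vec_index[OF x that] by (simp add: diff_eq_eq add.commute)
  qed
  have "0 < N" using root by simp
  then have "c = 0" by (rule no_generalized_fixed_vector[OF _ chain])
  then have "?C *\<^sub>v x = 0\<^sub>v N" unfolding c by (intro eq_vecI) (simp_all add: hvec_def)
  then show ?thesis using fixed_vec_proportional[OF x] char_matrix_1_kernel_iff[OF Pc_carrier x] by simp
qed

lemma order_char_poly_Pc_1: "Polynomial.order 1 (char_poly Pc) = 1"
proof -
  let ?C = "char_matrix Pc 1"
  have C: "?C \<in> carrier_mat N N" and C2: "?C ^\<^sub>m 2 \<in> carrier_mat N N" using Pc_carrier by auto
  have "?C *\<^sub>v hvec = 0\<^sub>v N" using char_matrix_1_kernel_iff[OF Pc_carrier hvec_carrier] Pc_hvec by simp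
  moreover have "?C *\<^sub>v 0\<^sub>v N = 0\<^sub>v N" by (intro eq_vecI) (use C in auto)
  ultimately have "?C ^\<^sub>m 2 *\<^sub>v hvec = 0\<^sub>v N" using mat_square_mult_vec[OF C hvec_carrier] by simp
  then have "dim_gen_eigenspace Pc 1 2 \<le> 1"
    unfolding dim_gen_eigenspace_def
    by (rule kernel_dim_le_1[OF C2 hvec_carrier _ gen_eigenspace_1_spanned])
  then have "Polynomial.order 1 (char_poly Pc) \<le> 1"
    by (rule order_char_poly_le_1_if_dim_gen_eigenspace_le_1[OF Pc_carrier])
  moreover have "poly (char_poly Pc) 1 = 0"
    using eigenvalue_Pc_1 eigenvalue_root_char_poly[OF Pc_carrier] by simp
  moreover have "char_poly Pc \<noteq> 0" using degree_monic_char_poly[OF Pc_carrier] by auto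
  ultimately show ?thesis by (simp add: order_root)
qed

theorem simple_one_rest_inside: "simple_one_rest_inside P"
  unfolding simple_one_rest_inside_def Let_def
  using eigenvalue_Pc_1 order_char_poly_Pc_1 eigenvalue_Pc_inside_unit_disc by blast

end

section \<open>Kronecker sums\<close>

lemma mult_add_less_mult:
  fixes a b n m :: nat
  assumes "a < n" "b < m"
  shows "a * m + b < n * m"
proof -
  have "a * m + b < Suc a * m" using assms(2) by simp
  also have "\<dots> \<le> n * m" using assms(1) by (intro mult_right_mono) auto
  finally show ?thesis .
qed

lemma sum_lessThan_mult_div_mod:
  fixes n m :: nat
  shows "(\<Sum>y<n*m. f (y div m) (y mod m)) = (\<Sum>c<n. \<Sum>d<m. (f c d :: 'a::comm_monoid_add))"
proof -
  have "(\<Sum>y<n*m. f (y div m) (y mod m)) = (\<Sum>(c,d)\<in>{..<n}\<times>{..<m}. f c d)"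
    by (rule sum.reindex_bij_witness[of _ "\<lambda>(c,d). c*m+d" "\<lambda>y. (y div m, y mod m)"])
       (auto simp: less_mult_imp_div_less mult_add_less_mult intro!: mod_less_divisor Nat.gr0I)
  then show ?thesis by (simp add: sum.cartesian_product)
qed

lemma rtrancl_map:
  assumes "\<And>x y. (x, y) \<in> R \<Longrightarrow> (f x, f y) \<in> S" and "(x, y) \<in> R\<^sup>*"
  shows "(f x, f y) \<in> S\<^sup>*"
  using assms(2) by (induction rule: rtrancl_induct) (auto intro: rtrancl_into_rtrancl assms(1))

lemma msum_kron_index:
  assumes carrier: "\<forall>e\<in>E. X e \<in> carrier_mat n n \<and> Y e \<in> carrier_mat n n"
    and "x < n * n" "y < n * n"
  shows "msum (n*n) (\<lambda>e. w e \<cdot>\<^sub>m kron (X e) (Y e)) E $$ (x,y)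
    = (\<Sum>e\<in>E. w e * (X e $$ (x div n, y div n) * Y e $$ (x mod n, y mod n)))"
  unfolding msum_def using assms by (auto simp: kron_def intro!: sum.cong)

lemma msum_kron_index_pair:
  assumes "\<forall>e\<in>E. X e \<in> carrier_mat n n \<and> Y e \<in> carrier_mat n n"
    and "a < n" "b < n" "c < n" "d < n"
  shows "msum (n*n) (\<lambda>e. w e \<cdot>\<^sub>m kron (X e) (Y e)) E $$ (a*n+b, c*n+d)
    = (\<Sum>e\<in>E. w e * (X e $$ (a,c) * Y e $$ (b,d)))"
  using msum_kron_index[OF assms(1), where x = "a*n+b" and y = "c*n+d"] assms(2-)
    mult_add_less_mult[of a n b n] mult_add_less_mult[of c n d n]
  by (simp add: mult.commute)

lemma msum_kron_mult_product:
  fixes X Y :: "'e \<Rightarrow> 'a::comm_semiring_0 mat"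
  assumes "\<forall>e\<in>E. X e \<in> carrier_mat n n \<and> Y e \<in> carrier_mat n n" and "k < n * n"
  shows "(\<Sum>y<n*n. msum (n*n) (\<lambda>e. w e \<cdot>\<^sub>m kron (X e) (Y e)) E $$ (k,y) * (u (y div n) * v (y mod n)))
    = (\<Sum>e\<in>E. w e * ((\<Sum>a<n. X e $$ (k div n, a) * u a) * (\<Sum>b<n. Y e $$ (k mod n, b) * v b)))"
proof -
  define x where "x e a = X e $$ (k div n, a)" for e a
  define y where "y e b = Y e $$ (k mod n, b)" for e b
  have "(\<Sum>j<n*n. msum (n*n) (\<lambda>e. w e \<cdot>\<^sub>m kron (X e) (Y e)) E $$ (k,j) * (u (j div n) * v (j mod n)))
      = (\<Sum>j<n*n. (\<Sum>e\<in>E. w e * (x e (j div n) * y e (j mod n))) * (u (j div n) * v (j mod n)))"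
    by (intro sum.cong refl) (simp add: msum_kron_index[OF assms(1) assms(2)] x_def y_def)
  also have "\<dots> = (\<Sum>a<n. \<Sum>b<n. (\<Sum>e\<in>E. w e * (x e a * y e b)) * (u a * v b))"
    by (rule sum_lessThan_mult_div_mod)
  also have "\<dots> = (\<Sum>a<n. \<Sum>b<n. \<Sum>e\<in>E. w e * ((x e a * u a) * (y e b * v b)))"
    by (simp add: sum_distrib_left sum_distrib_right mult_ac)
  also have "\<dots> = (\<Sum>a<n. \<Sum>e\<in>E. \<Sum>b<n. w e * ((x e a * u a) * (y e b * v b)))"
    by (intro sum.cong refl sum.swap)
  also have "\<dots> = (\<Sum>e\<in>E. \<Sum>a<n. \<Sum>b<n. w e * ((x e a * u a) * (y e b * v b)))"
    by (rule sum.swap)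
  also have "\<dots> = (\<Sum>e\<in>E. w e * (\<Sum>a<n. \<Sum>b<n. (x e a * u a) * (y e b * v b)))"
    by (simp add: sum_distrib_left)
  also have "\<dots> = (\<Sum>e\<in>E. w e * ((\<Sum>a<n. x e a * u a) * (\<Sum>b<n. y e b * v b)))"
    by (simp only: sum_product)
  finally show ?thesis unfolding x_def y_def .
qed

definition kron_support ::
  "nat \<Rightarrow> ('e \<Rightarrow> real mat) \<Rightarrow> ('e \<Rightarrow> real mat) \<Rightarrow> 'e set \<Rightarrow> ((nat \<times> nat) \<times> (nat \<times> nat)) set" where
  "kron_support n X Y E = {((a,b),(c,d)). a < n \<and> b < n \<and> c < n \<and> d < n \<and>
     (\<exists>e\<in>E. 0 < X e $$ (a,c) \<and> 0 < Y e $$ (b,d))}"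

lemma kron_supportI:
  "e \<in> E \<Longrightarrow> a < n \<Longrightarrow> b < n \<Longrightarrow> c < n \<Longrightarrow> d < n \<Longrightarrow>
    0 < X e $$ (a,c) \<Longrightarrow> 0 < Y e $$ (b,d) \<Longrightarrow> ((a,b),(c,d)) \<in> kron_support n X Y E"
  unfolding kron_support_def by blast

lemma msum_kron_pos_entry:
  assumes "finite E"
    and carrier: "\<forall>e\<in>E. X e \<in> carrier_mat n n \<and> Y e \<in> carrier_mat n n"
    and nonneg: "\<And>e a c. e \<in> E \<Longrightarrow> a < n \<Longrightarrow> c < n \<Longrightarrow> 0 \<le> X e $$ (a,c) \<and> 0 \<le> Y e $$ (a,c)"
    and w_pos: "\<And>e. e \<in> E \<Longrightarrow> 0 < w e"
    and "((a,b),(c,d)) \<in> kron_support n X Y E"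
  shows "0 < msum (n*n) (\<lambda>e. w e \<cdot>\<^sub>m kron (X e) (Y e)) E $$ (a*n+b, c*n+d)"
proof -
  from assms(5) obtain e where e: "e \<in> E" "0 < X e $$ (a,c)" "0 < Y e $$ (b,d)"
    and abcd: "a < n" "b < n" "c < n" "d < n" unfolding kron_support_def by blast
  have "0 < (\<Sum>e'\<in>E. w e' * (X e' $$ (a,c) * Y e' $$ (b,d)))"
  proof (rule sum_pos2[OF \<open>finite E\<close> e(1)])
    show "0 < w e * (X e $$ (a,c) * Y e $$ (b,d))" using e w_pos by simp
    show "0 \<le> w e' * (X e' $$ (a,c) * Y e' $$ (b,d))" if "e' \<in> E" for e'
      using that w_pos[OF that] nonneg[OF that] abcd by (simp add: less_imp_le)
  qed
  then show ?thesis using msum_kron_index_pair[OF carrier abcd] by simp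
qed

lemma rtrancl_kron_support_imp_pos_entries:
  assumes "finite E"
    and "\<forall>e\<in>E. X e \<in> carrier_mat n n \<and> Y e \<in> carrier_mat n n"
    and "\<And>e a c. e \<in> E \<Longrightarrow> a < n \<Longrightarrow> c < n \<Longrightarrow> 0 \<le> X e $$ (a,c) \<and> 0 \<le> Y e $$ (a,c)"
    and "\<And>e. e \<in> E \<Longrightarrow> 0 < w e"
    and path: "((a,b),(c,d)) \<in> (kron_support n X Y E)\<^sup>*"
  shows "(a*n+b, c*n+d) \<in> (pos_entries (n*n) (msum (n*n) (\<lambda>e. w e \<cdot>\<^sub>m kron (X e) (Y e)) E))\<^sup>*"
proof -
  let ?enc = "\<lambda>(a,b). a*n+b"
  have "(?enc (a,b), ?enc (c,d)) \<in> (pos_entries (n*n) (msum (n*n) (\<lambda>e. w e \<cdot>\<^sub>m kron (X e) (Y e)) E))\<^sup>*"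
  proof (rule rtrancl_map[where f = ?enc, OF _ path])
    fix p q assume pq: "(p, q) \<in> kron_support n X Y E"
    obtain a' b' c' d' where p: "p = (a',b')" and q: "q = (c',d')" by fastforce
    have "a' < n" "b' < n" "c' < n" "d' < n" using pq unfolding p q kron_support_def by auto
    then have "a' * n + b' < n * n" "c' * n + d' < n * n" by (simp_all add: mult_add_less_mult)
    then show "(?enc p, ?enc q) \<in> pos_entries (n*n) (msum (n*n) (\<lambda>e. w e \<cdot>\<^sub>m kron (X e) (Y e)) E)"
      using msum_kron_pos_entry[OF assms(1-4) pq[unfolded p q]] unfolding p q
      by (simp add: pos_entries_def)
  qed
  then show ?thesis by simp
qed

theorem simple_one_rest_inside_msum_kron:
  fixes X Y :: "'e \<Rightarrow> real mat" and w :: "'e \<Rightarrow> real" and u v :: "nat \<Rightarrow> real"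
  assumes "finite E"
    and carrier: "\<forall>e\<in>E. X e \<in> carrier_mat n n \<and> Y e \<in> carrier_mat n n"
    and nonneg: "\<And>e a c. e \<in> E \<Longrightarrow> a < n \<Longrightarrow> c < n \<Longrightarrow> 0 \<le> X e $$ (a,c) \<and> 0 \<le> Y e $$ (a,c)"
    and w_pos: "\<And>e. e \<in> E \<Longrightarrow> 0 < w e"
    and u_pos: "\<And>a. a < n \<Longrightarrow> 0 < u a" and v_pos: "\<And>b. b < n \<Longrightarrow> 0 < v b"
    and fixed: "\<And>a b. a < n \<Longrightarrow> b < n \<Longrightarrow>
      (\<Sum>e\<in>E. w e * ((\<Sum>c<n. X e $$ (a,c) * u c) * (\<Sum>d<n. Y e $$ (b,d) * v d))) = u a * v b"
    and loop: "((0,0),(0,0)) \<in> kron_support n X Y E"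
    and reach: "\<And>a b. a < n \<Longrightarrow> b < n \<Longrightarrow> ((a,b),(0,0)) \<in> (kron_support n X Y E)\<^sup>*"
  shows "simple_one_rest_inside (msum (n*n) (\<lambda>e. w e \<cdot>\<^sub>m kron (X e) (Y e)) E)"
proof -
  let ?M = "msum (n*n) (\<lambda>e. w e \<cdot>\<^sub>m kron (X e) (Y e)) E"
  have "0 < n" using loop by (simp add: kron_support_def)
  have div_mod: "k div n < n" "k mod n < n" if "k < n * n" for k
    using that \<open>0 < n\<close> by (simp_all add: less_mult_imp_div_less)
  have "rooted_nonneg_fixed_vector (n*n) ?M (\<lambda>k. u (k div n) * v (k mod n)) 0"
  proof unfold_locales
    show "?M \<in> carrier_mat (n*n) (n*n)" by (simp add: msum_def)
    show "0 \<le> ?M $$ (k,b)" if "k < n*n" "b < n*n" for k b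
      unfolding msum_kron_index[OF carrier that] using that div_mod nonneg
      by (intro sum_nonneg) (auto intro!: mult_nonneg_nonneg less_imp_le[OF w_pos])
    show "0 < u (k div n) * v (k mod n)" if "k < n*n" for k
      using u_pos v_pos div_mod[OF that] by simp
    show "(\<Sum>b<n*n. ?M $$ (k,b) * (u (b div n) * v (b mod n))) = u (k div n) * v (k mod n)"
      if "k < n*n" for k
      using msum_kron_mult_product[OF carrier that] fixed div_mod[OF that] by simp
    show "0 < n * n" using \<open>0 < n\<close> by simp
    show "0 < ?M $$ (0,0)" using msum_kron_pos_entry[OF \<open>finite E\<close> carrier nonneg w_pos loop] by simp
    show "(k, 0) \<in> (pos_entries (n*n) ?M)\<^sup>*" if "k < n*n" for k
      using rtrancl_kron_support_imp_pos_entries[OF \<open>finite E\<close> carrier nonneg w_pos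
          reach[OF div_mod[OF that]]] by simp
  qed
  then show ?thesis by (rule rooted_nonneg_fixed_vector.simple_one_rest_inside)
qed

lemma kron_carrier [simp]:
  "A \<in> carrier_mat n n \<Longrightarrow> B \<in> carrier_mat m m \<Longrightarrow> kron A B \<in> carrier_mat (n*m) (n*m)"
  by (simp add: kron_def)

lemma transpose_msum:
  assumes "\<And>e. e \<in> E \<Longrightarrow> F e \<in> carrier_mat m m"
  shows "transpose_mat (msum m F E) = msum m (\<lambda>e. transpose_mat (F e)) E"
  by (rule eq_matI) (auto simp: msum_def intro!: sum.cong dest: assms)

lemma transpose_smult_kron:
  assumes "A \<in> carrier_mat n n" "B \<in> carrier_mat m m"
  shows "transpose_mat (c \<cdot>\<^sub>m kron A B) = c \<cdot>\<^sub>m kron (transpose_mat A) (transpose_mat B)"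
proof (rule eq_matI)
  fix a b assume "a < dim_row (c \<cdot>\<^sub>m kron (transpose_mat A) (transpose_mat B))"
    and "b < dim_col (c \<cdot>\<^sub>m kron (transpose_mat A) (transpose_mat B))"
  then have ab: "a < n * m" "b < n * m" using assms by (simp_all add: kron_def)
  then have "0 < m" by (cases m) auto
  with ab show "transpose_mat (c \<cdot>\<^sub>m kron A B) $$ (a,b)
      = (c \<cdot>\<^sub>m kron (transpose_mat A) (transpose_mat B)) $$ (a,b)"
    using assms by (simp add: kron_def less_mult_imp_div_less mult.commute)
qed (use assms in \<open>simp_all add: kron_def\<close>)

corollary simple_one_rest_inside_msum_kron_edges:
  fixes X Y :: "nat \<Rightarrow> nat \<Rightarrow> real mat" and c :: "nat \<Rightarrow> nat \<Rightarrow> real" and u v :: "nat \<Rightarrow> real"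
    and E :: "(nat \<times> nat) set"
  assumes "finite E"
    and carrier: "\<And>j i. (j,i) \<in> E \<Longrightarrow> X j i \<in> carrier_mat n n \<and> Y j i \<in> carrier_mat n n"
    and nonneg: "\<And>j i a b. (j,i) \<in> E \<Longrightarrow> a < n \<Longrightarrow> b < n \<Longrightarrow> 0 \<le> X j i $$ (a,b) \<and> 0 \<le> Y j i $$ (a,b)"
    and c_pos: "\<And>j i. (j,i) \<in> E \<Longrightarrow> 0 < c j i"
    and u_pos: "\<And>a. a < n \<Longrightarrow> 0 < u a" and v_pos: "\<And>b. b < n \<Longrightarrow> 0 < v b"
    and fixed: "\<And>a b. a < n \<Longrightarrow> b < n \<Longrightarrow>
      (\<Sum>(j,i)\<in>E. c j i * ((\<Sum>k<n. X j i $$ (a,k) * u k) * (\<Sum>l<n. Y j i $$ (b,l) * v l))) = u a * v b"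
    and loop: "((0,0),(0,0)) \<in> kron_support n (case_prod X) (case_prod Y) E"
    and reach: "\<And>a b. a < n \<Longrightarrow> b < n \<Longrightarrow>
      ((a,b),(0,0)) \<in> (kron_support n (case_prod X) (case_prod Y) E)\<^sup>*"
  shows "simple_one_rest_inside (msum (n*n) (\<lambda>(j,i). c j i \<cdot>\<^sub>m kron (X j i) (Y j i)) E)"
proof -
  have "(\<lambda>(j,i). c j i \<cdot>\<^sub>m kron (X j i) (Y j i))
      = (\<lambda>e. case_prod c e \<cdot>\<^sub>m kron (case_prod X e) (case_prod Y e))"
    by (simp add: fun_eq_iff split_beta)
  moreover have "simple_one_rest_inside
      (msum (n*n) (\<lambda>e. case_prod c e \<cdot>\<^sub>m kron (case_prod X e) (case_prod Y e)) E)"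
    by (rule simple_one_rest_inside_msum_kron[OF \<open>finite E\<close> _ _ _ u_pos v_pos _ loop reach])
      (use carrier nonneg c_pos fixed in \<open>auto simp: split_beta\<close>)
  ultimately show ?thesis by simp
qed

section \<open>Column stochastic matrices on a strongly connected graph\<close>

lemma rtrancl_map_converse:
  assumes "\<And>j i. (j, i) \<in> E \<Longrightarrow> (f i, f j) \<in> R" and "(x, y) \<in> E\<^sup>*"
  shows "(f y, f x) \<in> R\<^sup>*"
proof -
  have "(y, x) \<in> (E\<inverse>)\<^sup>*" using assms(2) by (rule rtrancl_converseI)
  then show ?thesis by (rule rtrancl_map[where f = f, rotated]) (use assms(1) in auto)
qed

text \<open>Both coordinates move along the same edges; once the first has reached the root it
  stays there while the second one follows.\<close>

lemma rtrancl_merge_to_root: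
  fixes n :: nat
  assumes move: "\<And>j i a b. (j, i) \<in> E \<Longrightarrow> a < n \<Longrightarrow> b < n \<Longrightarrow>
      ((a, b), (if a = j then i else a, if b = j then i else b)) \<in> R"
    and E: "E \<subseteq> {0..<n} \<times> {0..<n}" and sc: "\<forall>u<n. \<forall>v<n. (u, v) \<in> E\<^sup>*"
    and "a < n" "b < n"
  shows "((a, b), (0, 0)) \<in> R\<^sup>*"
proof -
  have "0 < n" using \<open>a < n\<close> by simp
  have snd_to_root: "((0, b), (0, 0)) \<in> R\<^sup>*" if "(b, 0) \<in> E\<^sup>*" for b
    using that
  proof (induction rule: converse_rtrancl_induct)
    case (step b y)
    show ?case
    proof (cases "b = 0")
      case False
      have "b < n" using step.hyps(1) E by auto
      with False have "((0, b), (0, y)) \<in> R" using move[OF step.hyps(1) \<open>0 < n\<close>] by fastforce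
      then show ?thesis using step.IH by (rule converse_rtrancl_into_rtrancl)
    qed simp
  qed simp
  have "(a, 0) \<in> E\<^sup>*" using sc[rule_format, OF \<open>a < n\<close> \<open>0 < n\<close>] .
  then show ?thesis using \<open>b < n\<close>
  proof (induction arbitrary: b rule: converse_rtrancl_induct)
    case base
    show ?case using snd_to_root[OF sc[rule_format, OF base \<open>0 < n\<close>]] .
  next
    case (step a y)
    let ?b' = "if b = a then y else b"
    have "a < n" "y < n" using E step.hyps(1) by auto
    have "((a, b), (y, ?b')) \<in> R" using move[OF step.hyps(1) \<open>a < n\<close> step.prems] by simp
    moreover have "?b' < n" using \<open>y < n\<close> step.prems by simp
    ultimately show ?case using converse_rtrancl_into_rtrancl step.IH by metis
  qed
qed

lemma column_stochastic_fixed_vector: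
  fixes Q :: "nat \<Rightarrow> nat \<Rightarrow> real"
  assumes "0 < n" and col: "\<And>d. d < n \<Longrightarrow> (\<Sum>a<n. Q a d) = 1"
  obtains v where "\<And>a. a < n \<Longrightarrow> (\<Sum>d<n. Q a d * v d) = v a" "\<exists>a<n. v a \<noteq> 0"
proof -
  define M where "M = mat n n (\<lambda>(a,d). Q a d)"
  have M: "M \<in> carrier_mat n n" "transpose_mat M \<in> carrier_mat n n" unfolding M_def by auto
  define one where "one = vec n (\<lambda>_. 1::real)"
  have "transpose_mat M *\<^sub>v one = 1 \<cdot>\<^sub>v one"
    by (rule eq_vecI) (use col in \<open>auto simp: M_def one_def scalar_prod_def lessThan_atLeast0\<close>)
  moreover have "one \<noteq> 0\<^sub>v n"
  proof
    assume "one = 0\<^sub>v n"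
    then have "one $ 0 = 0" using \<open>0 < n\<close> by simp
    then show False using \<open>0 < n\<close> by (simp add: one_def)
  qed
  ultimately have "eigenvector (transpose_mat M) one 1"
    unfolding eigenvector_def using M by (simp add: one_def)
  then have "eigenvalue (transpose_mat M) 1" unfolding eigenvalue_def by blast
  then have "eigenvalue M 1"
    using eigenvalue_root_char_poly[OF M(2)] eigenvalue_root_char_poly[OF M(1)] M by simp
  then obtain v where v: "v \<in> carrier_vec n" "v \<noteq> 0\<^sub>v n" "M *\<^sub>v v = 1 \<cdot>\<^sub>v v"
    unfolding eigenvalue_def eigenvector_def using M by auto
  have "(\<Sum>d<n. Q a d * v $ d) = v $ a" if "a < n" for a
  proof -
    have "(M *\<^sub>v v) $ a = v $ a" using v(3) that v(1) by simp
    then show ?thesis using that v(1) by (simp add: M_def scalar_prod_def lessThan_atLeast0)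
  qed
  then show ?thesis using that nonzero_vec_ex_nonzero_index[OF v(1,2)] by blast
qed

text \<open>\<open>|v| \<le> Q |v|\<close> entrywise, and both sides have the same total because \<open>Q\<close> is
  column stochastic.\<close>

lemma column_stochastic_abs_fixed_vector:
  fixes Q :: "nat \<Rightarrow> nat \<Rightarrow> real"
  assumes nonneg: "\<And>a d. a < n \<Longrightarrow> d < n \<Longrightarrow> 0 \<le> Q a d"
    and col: "\<And>d. d < n \<Longrightarrow> (\<Sum>a<n. Q a d) = 1"
    and fixed: "\<And>a. a < n \<Longrightarrow> (\<Sum>d<n. Q a d * v d) = v a" and "a < n"
  shows "(\<Sum>d<n. Q a d * \<bar>v d\<bar>) = \<bar>v a\<bar>"
proof -
  have le: "\<bar>v a\<bar> \<le> (\<Sum>d<n. Q a d * \<bar>v d\<bar>)" if "a < n" for a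
  proof -
    have "\<bar>v a\<bar> = \<bar>\<Sum>d<n. Q a d * v d\<bar>" using fixed[OF that] by simp
    also have "\<dots> \<le> (\<Sum>d<n. \<bar>Q a d * v d\<bar>)" by (rule sum_abs)
    also have "\<dots> = (\<Sum>d<n. Q a d * \<bar>v d\<bar>)"
      by (rule sum.cong) (use nonneg that in \<open>auto simp: abs_mult\<close>)
    finally show ?thesis .
  qed
  have "(\<Sum>a<n. \<Sum>d<n. Q a d * \<bar>v d\<bar>) = (\<Sum>d<n. \<Sum>a<n. Q a d * \<bar>v d\<bar>)"
    by (rule sum.swap)
  also have "\<dots> = (\<Sum>d<n. (\<Sum>a<n. Q a d) * \<bar>v d\<bar>)" by (simp add: sum_distrib_right)
  also have "\<dots> = (\<Sum>a<n. \<bar>v a\<bar>)" using col by simp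
  finally have "(\<Sum>a<n. (\<Sum>d<n. Q a d * \<bar>v d\<bar>) - \<bar>v a\<bar>) = 0" by (simp add: sum_subtractf)
  then have "\<forall>a\<in>{..<n}. (\<Sum>d<n. Q a d * \<bar>v d\<bar>) - \<bar>v a\<bar> = 0"
    using sum_nonneg_eq_0_iff[of "{..<n}" "\<lambda>a. (\<Sum>d<n. Q a d * \<bar>v d\<bar>) - \<bar>v a\<bar>"] le by simp
  then show ?thesis using \<open>a < n\<close> by simp
qed

lemma fixed_vector_pos_if_strongly_connected:
  fixes Q :: "nat \<Rightarrow> nat \<Rightarrow> real"
  assumes nonneg: "\<And>a d. a < n \<Longrightarrow> d < n \<Longrightarrow> 0 \<le> Q a d"
    and u_nonneg: "\<And>a. a < n \<Longrightarrow> 0 \<le> u a"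
    and fixed: "\<And>a. a < n \<Longrightarrow> (\<Sum>d<n. Q a d * u d) = u a"
    and E: "E \<subseteq> {0..<n} \<times> {0..<n}" and edge_pos: "\<And>j i. (j, i) \<in> E \<Longrightarrow> 0 < Q i j"
    and sc: "\<forall>u<n. \<forall>v<n. (u, v) \<in> E\<^sup>*"
    and "a0 < n" "u a0 \<noteq> 0" and "a < n"
  shows "0 < u a"
proof -
  have zero_spreads: "u k = 0 \<longrightarrow> u a0 = 0" if "(a0, k) \<in> E\<^sup>*" for k
    using that
  proof (induction rule: rtrancl_induct)
    case (step y z)
    have yz: "y < n" "z < n" using step.hyps(2) E by auto
    show ?case
    proof
      assume "u z = 0"
      then have "(\<Sum>d<n. Q z d * u d) = 0" using fixed[OF yz(2)] by simp
      moreover have "\<forall>d\<in>{..<n}. 0 \<le> Q z d * u d" using nonneg u_nonneg yz by simp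
      ultimately have "\<forall>d\<in>{..<n}. Q z d * u d = 0"
        using sum_nonneg_eq_0_iff[of "{..<n}" "\<lambda>d. Q z d * u d"] by simp
      then have "Q z y * u y = 0" using yz by simp
      then have "u y = 0" using edge_pos[OF step.hyps(2)] by simp
      then show "u a0 = 0" using step.IH by simp
    qed
  qed simp
  have "u a \<noteq> 0"
    using zero_spreads[OF sc[rule_format, OF \<open>a0 < n\<close> \<open>a < n\<close>]] \<open>u a0 \<noteq> 0\<close> by blast
  then show ?thesis using u_nonneg[OF \<open>a < n\<close>] by (simp add: less_le)
qed

lemma column_stochastic_pos_fixed_vector:
  fixes Q :: "nat \<Rightarrow> nat \<Rightarrow> real"
  assumes "0 < n" and nonneg: "\<And>a d. a < n \<Longrightarrow> d < n \<Longrightarrow> 0 \<le> Q a d"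
    and col: "\<And>d. d < n \<Longrightarrow> (\<Sum>a<n. Q a d) = 1"
    and E: "E \<subseteq> {0..<n} \<times> {0..<n}" and edge_pos: "\<And>j i. (j, i) \<in> E \<Longrightarrow> 0 < Q i j"
    and sc: "\<forall>u<n. \<forall>v<n. (u, v) \<in> E\<^sup>*"
  obtains \<pi> where "\<And>a. a < n \<Longrightarrow> 0 < \<pi> a" "\<And>a. a < n \<Longrightarrow> (\<Sum>d<n. Q a d * \<pi> d) = \<pi> a"
proof -
  obtain v where fixed: "\<And>a. a < n \<Longrightarrow> (\<Sum>d<n. Q a d * v d) = v a" and "\<exists>a<n. v a \<noteq> 0"
    using column_stochastic_fixed_vector[where Q = Q, OF \<open>0 < n\<close> col] by blast
  then obtain a0 where "a0 < n" "\<bar>v a0\<bar> \<noteq> 0" by auto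
  have abs_fixed: "\<And>a. a < n \<Longrightarrow> (\<Sum>d<n. Q a d * \<bar>v d\<bar>) = \<bar>v a\<bar>"
    using column_stochastic_abs_fixed_vector[where Q = Q, OF nonneg col fixed] by blast
  have abs_nonneg: "\<And>a. a < n \<Longrightarrow> 0 \<le> \<bar>v a\<bar>" by simp
  have "0 < \<bar>v a\<bar>" if "a < n" for a
    using fixed_vector_pos_if_strongly_connected[OF nonneg abs_nonneg abs_fixed E edge_pos sc \<open>a0 < n\<close>] that
      \<open>\<bar>v a0\<bar> \<noteq> 0\<close> by blast
  then show ?thesis using abs_fixed by (rule that[of "\<lambda>a. \<bar>v a\<bar>"])
qed

section \<open>The matrices \<open>I - L\<^sub>j\<^sub>i\<close> and \<open>S\<^sub>j\<^sub>i\<close>\<close>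

lemma fcol_dims [simp]: "dim_row (fcol n i) = n" "dim_col (fcol n i) = 1"
  unfolding fcol_def by simp_all

lemma fcol_outer_carrier [simp]: "fcol n i * transpose_mat (fcol n j) \<in> carrier_mat n n"
  by (rule mult_carrier_mat[of _ n 1 _ n]) auto

lemma fcol_outer_index:
  assumes "a < n" "c < n"
  shows "(fcol n i * transpose_mat (fcol n j)) $$ (a,c) = (if a = i \<and> c = j then 1 else 0)"
  using assms unfolding fcol_def by (simp add: scalar_prod_def)

lemma Lmat_carrier [simp]: "Lmat n w j i \<in> carrier_mat n n"
  unfolding Lmat_def by (rule minus_carrier_mat) simp

lemma one_minus_Lmat_carrier [simp]: "1\<^sub>m n - Lmat n w j i \<in> carrier_mat n n"
  by (rule minus_carrier_mat) simp_all

lemma Smat_eq: "Smat n j i = 1\<^sub>m n - (fcol n j * transpose_mat (fcol n j) - fcol n i * transpose_mat (fcol n j))"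
  unfolding Smat_def by (subst minus_mult_distrib_mat[of _ n 1]) auto

lemma Smat_carrier [simp]: "Smat n j i \<in> carrier_mat n n"
  unfolding Smat_eq by (rule minus_carrier_mat, rule minus_carrier_mat) simp

lemma Smat_dims [simp]: "dim_row (Smat n j i) = n" "dim_col (Smat n j i) = n"
  using Smat_carrier[of n j i] unfolding carrier_mat_def by simp_all

lemma one_minus_Lmat_index:
  assumes "a < n" "c < n"
  shows "(1\<^sub>m n - Lmat n w j i) $$ (a,c) =
    (if a = c then 1 else 0) - (if a = i \<and> c = i then w i j else 0) + (if a = i \<and> c = j then w i j else 0)"
proof -
  have "(1\<^sub>m n - Lmat n w j i) $$ (a,c) = 1\<^sub>m n $$ (a,c) - Lmat n w j i $$ (a,c)"
    using assms Lmat_carrier[of n w j i] by (simp del: Lmat_carrier)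
  also have "Lmat n w j i $$ (a,c) = w i j * (fcol n i * transpose_mat (fcol n i)) $$ (a,c)
      - w i j * (fcol n i * transpose_mat (fcol n j)) $$ (a,c)"
    unfolding Lmat_def using assms fcol_outer_carrier[of n i i] fcol_outer_carrier[of n i j]
    by (simp del: fcol_outer_carrier)
  finally show ?thesis using assms by (simp add: fcol_outer_index del: index_mult_mat)
qed

lemma Smat_index:
  assumes "a < n" "c < n"
  shows "Smat n j i $$ (a,c) =
    (if a = c then 1 else 0) - (if c = j then (if a = j then 1 else 0) - (if a = i then 1 else 0) else 0)"
proof -
  have "Smat n j i $$ (a,c) = 1\<^sub>m n $$ (a,c) - ((fcol n j * transpose_mat (fcol n j)) $$ (a,c)
      - (fcol n i * transpose_mat (fcol n j)) $$ (a,c))"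
    unfolding Smat_eq using assms fcol_outer_carrier[of n j j] fcol_outer_carrier[of n i j]
    by (simp del: fcol_outer_carrier)
  then show ?thesis using assms by (simp add: fcol_outer_index del: index_mult_mat)
qed

context
  fixes n i j :: nat and w :: "nat \<Rightarrow> nat \<Rightarrow> real"
  assumes ij: "i < n" "j < n" "i \<noteq> j" and w: "0 < w i j" "w i j < 1"
begin

lemma one_minus_Lmat_nonneg: "a < n \<Longrightarrow> c < n \<Longrightarrow> 0 \<le> (1\<^sub>m n - Lmat n w j i) $$ (a,c)"
  using ij w by (simp add: one_minus_Lmat_index)

lemma one_minus_Lmat_diag_pos: "a < n \<Longrightarrow> 0 < (1\<^sub>m n - Lmat n w j i) $$ (a,a)"
  using ij w by (simp add: one_minus_Lmat_index)

lemma one_minus_Lmat_edge_pos: "0 < (1\<^sub>m n - Lmat n w j i) $$ (i,j)"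
  using ij w by (simp add: one_minus_Lmat_index)

lemma one_minus_Lmat_row_sum:
  assumes "a < n"
  shows "(\<Sum>c<n. (1\<^sub>m n - Lmat n w j i) $$ (a,c)) = 1"
proof -
  have "(\<Sum>c<n. (1\<^sub>m n - Lmat n w j i) $$ (a,c)) = (\<Sum>c<n. (if a = c then 1 else 0)
      - (if a = i \<and> c = i then w i j else 0) + (if a = i \<and> c = j then w i j else 0))"
    by (rule sum.cong) (use assms in \<open>auto simp: one_minus_Lmat_index\<close>)
  also have "\<dots> = 1" using assms ij by (cases "a = i") (simp_all add: sum.distrib sum_subtractf)
  finally show ?thesis .
qed

end

context
  fixes n i j :: nat
  assumes ij: "i < n" "j < n" "i \<noteq> j"
begin

lemma Smat_nonneg: "a < n \<Longrightarrow> c < n \<Longrightarrow> 0 \<le> Smat n j i $$ (a,c)"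
  using ij by (simp add: Smat_index)

lemma Smat_diag: "a < n \<Longrightarrow> a \<noteq> j \<Longrightarrow> Smat n j i $$ (a,a) = 1"
  using ij by (simp add: Smat_index)

lemma Smat_edge: "Smat n j i $$ (i,j) = 1"
  using ij by (simp add: Smat_index)

lemma Smat_col_sum:
  assumes "c < n"
  shows "(\<Sum>a<n. Smat n j i $$ (a,c)) = 1"
proof -
  have "(\<Sum>a<n. Smat n j i $$ (a,c)) = (\<Sum>a<n. (if a = c then 1 else 0)
      - (if c = j then (if a = j then 1 else 0) - (if a = i then 1 else 0) else 0))"
    by (rule sum.cong) (use assms in \<open>auto simp: Smat_index\<close>)
  also have "\<dots> = 1" using assms ij by (cases "c = j") (simp_all add: sum.distrib sum_subtractf)
  finally show ?thesis .
qed

end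

section \<open>The four matrices\<close>

context
  fixes n :: nat and E :: "(nat \<times> nat) set" and p w :: "nat \<Rightarrow> nat \<Rightarrow> real"
  assumes n: "n > 1"
    and E: "E \<subseteq> {0..<n} \<times> {0..<n}"
    and no_loops: "\<forall>(j,i)\<in>E. j \<noteq> i"
    and p: "\<forall>(j,i)\<in>E. 0 < p i j \<and> p i j < 1"
    and p_sum: "(\<Sum>(j,i)\<in>E. p i j) = 1"
    and w: "\<forall>(j,i)\<in>E. 0 < w i j \<and> w i j < 1"
    and strongly_connected: "\<forall>u<n. \<forall>v<n. (u, v) \<in> E\<^sup>*"
begin

lemma finite_E: "finite E"
  using E by (rule finite_subset) auto

lemma edge_bounds: "(j,i) \<in> E \<Longrightarrow> i < n \<and> j < n \<and> i \<noteq> j"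
  using E no_loops by fastforce

lemma edge_weights: "(j,i) \<in> E \<Longrightarrow> 0 < p i j \<and> 0 < w i j \<and> w i j < 1"
  using p w by fastforce

lemma path: "u < n \<Longrightarrow> v < n \<Longrightarrow> (u, v) \<in> E\<^sup>*"
  using strongly_connected by blast

text \<open>The tail of this edge is not \<open>0\<close>, so the corresponding \<open>S\<close> has a positive
  entry at \<open>(0,0)\<close>: this is the loop at the root needed for aperiodicity.\<close>

lemma edge_from_1: obtains i where "(1, i) \<in> E"
proof -
  have "(1, 0) \<in> E\<^sup>*" using path n by simp
  then show ?thesis using that by (cases rule: converse_rtranclE) auto
qed

lemma mean_S_positive_fixed_vector:
  obtains \<pi> where "\<And>a. a < n \<Longrightarrow> 0 < \<pi> a"
    "\<And>a. a < n \<Longrightarrow> (\<Sum>d<n. (\<Sum>(j,i)\<in>E. p i j * Smat n j i $$ (a,d)) * \<pi> d) = \<pi> a"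
proof -
  define Q where "Q a d = (\<Sum>(j,i)\<in>E. p i j * Smat n j i $$ (a,d))" for a d
  have nonneg: "0 \<le> Q a d" if "a < n" "d < n" for a d
    unfolding Q_def using that
    by (intro sum_nonneg) (auto simp: Smat_nonneg dest: edge_bounds edge_weights intro!: mult_nonneg_nonneg)
  have col: "(\<Sum>a<n. Q a d) = 1" if "d < n" for d
  proof -
    have "(\<Sum>a<n. Q a d) = (\<Sum>(j,i)\<in>E. p i j * (\<Sum>a<n. Smat n j i $$ (a,d)))"
      unfolding Q_def by (simp add: sum.swap[of _ "{..<n}"] sum_distrib_left split_beta)
    also have "\<dots> = (\<Sum>(j,i)\<in>E. p i j)"
      by (intro sum.cong refl) (use that edge_bounds in \<open>auto simp: Smat_col_sum\<close>)
    finally show ?thesis using p_sum by simp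
  qed
  have edge_pos: "0 < Q i j" if e: "(j,i) \<in> E" for j i
    unfolding Q_def
  proof (rule sum_pos2[OF finite_E e])
    show "0 < (case (j,i) of (j',i') \<Rightarrow> p i' j' * Smat n j' i' $$ (i,j))"
      using edge_bounds[OF e] edge_weights[OF e] by (simp add: Smat_edge)
    fix e' assume "e' \<in> E"
    then show "0 \<le> (case e' of (j',i') \<Rightarrow> p i' j' * Smat n j' i' $$ (i,j))"
      using edge_bounds[OF e]
      by (auto simp: Smat_nonneg dest: edge_bounds edge_weights intro!: mult_nonneg_nonneg split: prod.split)
  qed
  have "0 < n" using n by simp
  obtain \<pi> where "\<And>a. a < n \<Longrightarrow> 0 < \<pi> a" "\<And>a. a < n \<Longrightarrow> (\<Sum>d<n. Q a d * \<pi> d) = \<pi> a"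
    using column_stochastic_pos_fixed_vector[where Q = Q, OF \<open>0 < n\<close> nonneg col E edge_pos
        strongly_connected] by blast
  then show ?thesis using that unfolding Q_def by blast
qed

lemma one_minus_Lmat_on_edge:
  assumes "(j,i) \<in> E"
  shows "\<And>a c. a < n \<Longrightarrow> c < n \<Longrightarrow> 0 \<le> (1\<^sub>m n - Lmat n w j i) $$ (a,c)"
    and "\<And>a. a < n \<Longrightarrow> 0 < (1\<^sub>m n - Lmat n w j i) $$ (a,a)"
    and "0 < (1\<^sub>m n - Lmat n w j i) $$ (i,j)"
    and "\<And>a. a < n \<Longrightarrow> (\<Sum>c<n. (1\<^sub>m n - Lmat n w j i) $$ (a,c) * 1) = 1"
  using edge_bounds[OF assms] edge_weights[OF assms]
  by (simp_all add: one_minus_Lmat_nonneg one_minus_Lmat_diag_pos one_minus_Lmat_edge_pos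
      one_minus_Lmat_row_sum)

lemma Smat_on_edge:
  assumes "(j,i) \<in> E"
  shows "\<And>a c. a < n \<Longrightarrow> c < n \<Longrightarrow> 0 \<le> Smat n j i $$ (a,c)"
    and "\<And>a. a < n \<Longrightarrow> a \<noteq> j \<Longrightarrow> 0 < Smat n j i $$ (a,a)"
    and "0 < Smat n j i $$ (i,j)"
    and "\<And>c. c < n \<Longrightarrow> (\<Sum>a<n. Smat n j i $$ (a,c)) = 1"
  using edge_bounds[OF assms] by (simp_all add: Smat_nonneg Smat_diag Smat_edge Smat_col_sum)

lemma simple_one_rest_inside_IL_IL:
  "simple_one_rest_inside (msum (n*n) (\<lambda>(j,i). p i j \<cdot>\<^sub>m kron (1\<^sub>m n - Lmat n w j i) (1\<^sub>m n - Lmat n w j i)) E)"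
proof (rule simple_one_rest_inside_msum_kron_edges[OF finite_E, where u = "\<lambda>_. 1" and v = "\<lambda>_. 1"])
  let ?S = "kron_support n (\<lambda>(j,i). 1\<^sub>m n - Lmat n w j i) (\<lambda>(j,i). 1\<^sub>m n - Lmat n w j i) E"
  have move_fst: "((i,b),(j,b)) \<in> ?S" and move_snd: "((b,i),(b,j)) \<in> ?S"
    if e: "(j,i) \<in> E" and "b < n" for j i b
    using one_minus_Lmat_on_edge[OF e] edge_bounds[OF e] \<open>b < n\<close> by (auto intro!: kron_supportI[OF e])
  show "((a,b),(0,0)) \<in> ?S\<^sup>*" if "a < n" "b < n" for a b
  proof -
    have "((a,b),(0,b)) \<in> ?S\<^sup>*"
      by (rule rtrancl_map_converse[where f = "\<lambda>x. (x,b)", OF move_fst[OF _ \<open>b < n\<close>]])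
        (use path that in auto)
    moreover have "((0,b),(0,0)) \<in> ?S\<^sup>*"
      by (rule rtrancl_map_converse[where f = "\<lambda>x. (0,x)", OF move_snd]) (use path that in auto)
    ultimately show ?thesis by (rule rtrancl_trans)
  qed
  obtain i where e: "(1,i) \<in> E" by (rule edge_from_1)
  show "((0,0),(0,0)) \<in> ?S"
    using one_minus_Lmat_on_edge[OF e] n by (auto intro!: kron_supportI[OF e])
  show "(\<Sum>(j,i)\<in>E. p i j * ((\<Sum>k<n. (1\<^sub>m n - Lmat n w j i) $$ (a,k) * 1)
      * (\<Sum>l<n. (1\<^sub>m n - Lmat n w j i) $$ (b,l) * 1))) = 1 * 1" if "a < n" "b < n" for a b
    using p_sum one_minus_Lmat_on_edge(4) that by (simp add: split_beta cong: sum.cong)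
qed (use one_minus_Lmat_on_edge edge_weights in auto)

lemma simple_one_rest_inside_IL_S:
  "simple_one_rest_inside (msum (n*n) (\<lambda>(j,i). p i j \<cdot>\<^sub>m kron (1\<^sub>m n - Lmat n w j i) (Smat n j i)) E)"
proof -
  obtain \<pi> where \<pi>_pos: "\<And>a. a < n \<Longrightarrow> 0 < \<pi> a"
    and \<pi>_fixed: "\<And>a. a < n \<Longrightarrow> (\<Sum>d<n. (\<Sum>(j,i)\<in>E. p i j * Smat n j i $$ (a,d)) * \<pi> d) = \<pi> a"
    by (rule mean_S_positive_fixed_vector) blast
  show ?thesis
  proof (rule simple_one_rest_inside_msum_kron_edges[OF finite_E, where u = "\<lambda>_. 1" and v = \<pi>])
    let ?S = "kron_support n (\<lambda>(j,i). 1\<^sub>m n - Lmat n w j i) (\<lambda>(j,i). Smat n j i) E"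
    have move_snd: "((b,i),(b,j)) \<in> ?S" and move_diag: "((i,i),(j,j)) \<in> ?S"
      if e: "(j,i) \<in> E" and "b < n" for j i b
      using one_minus_Lmat_on_edge[OF e] Smat_on_edge[OF e] edge_bounds[OF e] \<open>b < n\<close>
      by (auto intro!: kron_supportI[OF e])
    show "((a,b),(0,0)) \<in> ?S\<^sup>*" if "a < n" "b < n" for a b
    proof -
      have "((a,b),(a,a)) \<in> ?S\<^sup>*"
        by (rule rtrancl_map_converse[where f = "\<lambda>x. (a,x)", OF move_snd[OF _ \<open>a < n\<close>]])
          (use path that in auto)
      moreover have "((a,a),(0,0)) \<in> ?S\<^sup>*"
        by (rule rtrancl_map_converse[where f = "\<lambda>x. (x,x)", OF move_diag[OF _ \<open>a < n\<close>]])
          (use path that in auto)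
      ultimately show ?thesis by (rule rtrancl_trans)
    qed
    obtain i where e: "(1,i) \<in> E" by (rule edge_from_1)
    show "((0,0),(0,0)) \<in> ?S"
      using one_minus_Lmat_on_edge[OF e] Smat_on_edge[OF e] n by (auto intro!: kron_supportI[OF e])
    show "(\<Sum>(j,i)\<in>E. p i j * ((\<Sum>k<n. (1\<^sub>m n - Lmat n w j i) $$ (a,k) * 1)
        * (\<Sum>l<n. Smat n j i $$ (b,l) * \<pi> l))) = 1 * \<pi> b" if "a < n" "b < n" for a b
    proof -
      have "(\<Sum>(j,i)\<in>E. p i j * ((\<Sum>k<n. (1\<^sub>m n - Lmat n w j i) $$ (a,k) * 1)
          * (\<Sum>l<n. Smat n j i $$ (b,l) * \<pi> l)))
          = (\<Sum>(j,i)\<in>E. p i j * (\<Sum>l<n. Smat n j i $$ (b,l) * \<pi> l))"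
        using one_minus_Lmat_on_edge(4) that by (intro sum.cong refl) (auto split: prod.split)
      also have "\<dots> = (\<Sum>l<n. \<Sum>(j,i)\<in>E. p i j * Smat n j i $$ (b,l) * \<pi> l)"
        unfolding split_beta sum_distrib_left mult.assoc by (rule sum.swap)
      also have "\<dots> = \<pi> b"
        using \<pi>_fixed[OF \<open>b < n\<close>] by (simp add: sum_distrib_right split_beta)
      finally show ?thesis by simp
    qed
  qed (use one_minus_Lmat_on_edge Smat_on_edge edge_weights \<pi>_pos in auto)
qed

lemma simple_one_rest_inside_S_IL:
  "simple_one_rest_inside (msum (n*n) (\<lambda>(j,i). p i j \<cdot>\<^sub>m kron (Smat n j i) (1\<^sub>m n - Lmat n w j i)) E)"
proof -
  obtain \<pi> where \<pi>_pos: "\<And>a. a < n \<Longrightarrow> 0 < \<pi> a"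
    and \<pi>_fixed: "\<And>a. a < n \<Longrightarrow> (\<Sum>d<n. (\<Sum>(j,i)\<in>E. p i j * Smat n j i $$ (a,d)) * \<pi> d) = \<pi> a"
    by (rule mean_S_positive_fixed_vector) blast
  show ?thesis
  proof (rule simple_one_rest_inside_msum_kron_edges[OF finite_E, where u = \<pi> and v = "\<lambda>_. 1"])
    let ?S = "kron_support n (\<lambda>(j,i). Smat n j i) (\<lambda>(j,i). 1\<^sub>m n - Lmat n w j i) E"
    have move_fst: "((i,b),(j,b)) \<in> ?S" and move_diag: "((i,i),(j,j)) \<in> ?S"
      if e: "(j,i) \<in> E" and "b < n" for j i b
      using one_minus_Lmat_on_edge[OF e] Smat_on_edge[OF e] edge_bounds[OF e] \<open>b < n\<close>
      by (auto intro!: kron_supportI[OF e])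
    show "((a,b),(0,0)) \<in> ?S\<^sup>*" if "a < n" "b < n" for a b
    proof -
      have "((a,b),(b,b)) \<in> ?S\<^sup>*"
        by (rule rtrancl_map_converse[where f = "\<lambda>x. (x,b)", OF move_fst[OF _ \<open>b < n\<close>]])
          (use path that in auto)
      moreover have "((b,b),(0,0)) \<in> ?S\<^sup>*"
        by (rule rtrancl_map_converse[where f = "\<lambda>x. (x,x)", OF move_diag[OF _ \<open>b < n\<close>]])
          (use path that in auto)
      ultimately show ?thesis by (rule rtrancl_trans)
    qed
    obtain i where e: "(1,i) \<in> E" by (rule edge_from_1)
    show "((0,0),(0,0)) \<in> ?S"
      using one_minus_Lmat_on_edge[OF e] Smat_on_edge[OF e] n by (auto intro!: kron_supportI[OF e])
    show "(\<Sum>(j,i)\<in>E. p i j * ((\<Sum>k<n. Smat n j i $$ (a,k) * \<pi> k)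
        * (\<Sum>l<n. (1\<^sub>m n - Lmat n w j i) $$ (b,l) * 1))) = \<pi> a * 1" if "a < n" "b < n" for a b
    proof -
      have "(\<Sum>(j,i)\<in>E. p i j * ((\<Sum>k<n. Smat n j i $$ (a,k) * \<pi> k)
          * (\<Sum>l<n. (1\<^sub>m n - Lmat n w j i) $$ (b,l) * 1)))
          = (\<Sum>(j,i)\<in>E. p i j * (\<Sum>k<n. Smat n j i $$ (a,k) * \<pi> k))"
        using one_minus_Lmat_on_edge(4) that by (intro sum.cong refl) (auto split: prod.split)
      also have "\<dots> = (\<Sum>k<n. \<Sum>(j,i)\<in>E. p i j * Smat n j i $$ (a,k) * \<pi> k)"
        unfolding split_beta sum_distrib_left mult.assoc by (rule sum.swap)
      also have "\<dots> = \<pi> a"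
        using \<pi>_fixed[OF \<open>a < n\<close>] by (simp add: sum_distrib_right split_beta)
      finally show ?thesis by simp
    qed
  qed (use one_minus_Lmat_on_edge Smat_on_edge edge_weights \<pi>_pos in auto)
qed

text \<open>\<open>S \<otimes> S\<close> is column stochastic, so its transpose is handled like \<open>(I - L) \<otimes> (I - L)\<close>.\<close>

lemma simple_one_rest_inside_S_S:
  "simple_one_rest_inside (msum (n*n) (\<lambda>(j,i). p i j \<cdot>\<^sub>m kron (Smat n j i) (Smat n j i)) E)"
proof (rule simple_one_rest_inside_transpose)
  let ?F = "\<lambda>(j,i). p i j \<cdot>\<^sub>m kron (Smat n j i) (Smat n j i)"
  show "msum (n*n) ?F E \<in> carrier_mat (n*n) (n*n)" by (simp add: msum_def)
  have "transpose_mat (msum (n*n) ?F E) = msum (n*n) (\<lambda>e. transpose_mat (?F e)) E"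
    by (rule transpose_msum) (simp add: split_beta)
  also have "\<dots> = msum (n*n) (\<lambda>(j,i). p i j \<cdot>\<^sub>m
      kron (transpose_mat (Smat n j i)) (transpose_mat (Smat n j i))) E"
    by (rule arg_cong[where f = "\<lambda>F. msum (n*n) F E"], rule ext)
      (simp add: split_beta transpose_smult_kron[OF Smat_carrier Smat_carrier])
  finally have transpose_eq: "transpose_mat (msum (n*n) ?F E) = \<dots>" .
  let ?ST = "\<lambda>j i. transpose_mat (Smat n j i)"
  have ST_pos: "0 < ?ST j i $$ (a, if a = j then i else a)" if e: "(j,i) \<in> E" and "a < n" for j i a
    using Smat_on_edge[OF e] edge_bounds[OF e] \<open>a < n\<close> by auto
  show "simple_one_rest_inside (transpose_mat (msum (n*n) ?F E))"
    unfolding transpose_eq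
  proof (rule simple_one_rest_inside_msum_kron_edges[OF finite_E, where u = "\<lambda>_. 1" and v = "\<lambda>_. 1"])
    let ?S = "kron_support n (case_prod ?ST) (case_prod ?ST) E"
    show "((a,b),(0,0)) \<in> ?S\<^sup>*" if "a < n" "b < n" for a b
    proof (rule rtrancl_merge_to_root[OF _ E strongly_connected that])
      fix j i a b assume e: "(j,i) \<in> E" and "a < n" "b < n"
      then show "((a,b),(if a = j then i else a, if b = j then i else b)) \<in> ?S"
        using ST_pos[OF e] edge_bounds[OF e] by (intro kron_supportI[OF e]) auto
    qed
    obtain i where e: "(1,i) \<in> E" by (rule edge_from_1)
    show "((0,0),(0,0)) \<in> ?S"
      using ST_pos[OF e, of 0] n by (auto intro!: kron_supportI[OF e])
    show "(\<Sum>(j,i)\<in>E. p i j * ((\<Sum>k<n. ?ST j i $$ (a,k) * 1) * (\<Sum>l<n. ?ST j i $$ (b,l) * 1)))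
        = 1 * 1" if "a < n" "b < n" for a b
    proof -
      have row_sum: "(\<Sum>k<n. ?ST j i $$ (c,k) * 1) = 1" if "(j,i) \<in> E" "c < n" for j i c
      proof -
        have "(\<Sum>k<n. ?ST j i $$ (c,k) * 1) = (\<Sum>k<n. Smat n j i $$ (k,c))"
          using \<open>c < n\<close> by (intro sum.cong) simp_all
        then show ?thesis using Smat_on_edge(4)[OF that] by simp
      qed
      have "(\<Sum>(j,i)\<in>E. p i j * ((\<Sum>k<n. ?ST j i $$ (a,k) * 1) * (\<Sum>l<n. ?ST j i $$ (b,l) * 1)))
          = (\<Sum>(j,i)\<in>E. p i j)"
        using row_sum that by (intro sum.cong refl) (auto split: prod.split)
      then show ?thesis using p_sum by simp
    qed
  qed (use Smat_on_edge edge_weights in auto)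
qed

end

theorem lemma6:
  fixes n :: nat and E :: "(nat \<times> nat) set" and p w :: "nat \<Rightarrow> nat \<Rightarrow> real"
  assumes "n > 1"
    and "E \<subseteq> {0..<n} \<times> {0..<n}"
    and "\<forall>(j,i)\<in>E. j \<noteq> i"
    and "\<forall>(j,i)\<in>E. 0 < p i j \<and> p i j < 1"
    and "(\<Sum>(j,i)\<in>E. p i j) = 1"
    and "\<forall>(j,i)\<in>E. 0 < w i j \<and> w i j < 1"
    and "\<forall>u<n. \<forall>v<n. (u, v) \<in> E\<^sup>*"
  shows "simple_one_rest_inside
           (msum (n*n) (\<lambda>(j,i). p i j \<cdot>\<^sub>m kron (1\<^sub>m n - Lmat n w j i) (1\<^sub>m n - Lmat n w j i)) E)
       \<and> simple_one_rest_inside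
           (msum (n*n) (\<lambda>(j,i). p i j \<cdot>\<^sub>m kron (1\<^sub>m n - Lmat n w j i) (Smat n j i)) E)
       \<and> simple_one_rest_inside
           (msum (n*n) (\<lambda>(j,i). p i j \<cdot>\<^sub>m kron (Smat n j i) (1\<^sub>m n - Lmat n w j i)) E)
       \<and> simple_one_rest_inside
           (msum (n*n) (\<lambda>(j,i). p i j \<cdot>\<^sub>m kron (Smat n j i) (Smat n j i)) E)"
  using simple_one_rest_inside_IL_IL[OF assms] simple_one_rest_inside_IL_S[OF assms]
    simple_one_rest_inside_S_IL[OF assms] simple_one_rest_inside_S_S[OF assms]
  by blast

end
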